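(* Let $S$ be a finite semigroup and $J$ a regular $\mathscr J$-class of $S$ such that for any two distinct $\mathscr L$-classes $L,L'$ of $J$ there is an $\mathscr R$-class $R$ of $J$ such that exactly one of $R\cap L$ and $R\cap L'$ contains an idempotent. Then, for any right $G_J$-set $X$, the Green's congruence with respect to $e_J$ on $X\otimes_{G_J}R_J$ is the equality relation.
   Context: Semigroups act on the right; $e_J\in J$ is a fixed idempotent, $G_J$ its maximal subgroup, $R_J$ its $\mathscr R$-class, a partial $S$-set via $r\cdot s=rs$ if $rs\in R_J$, undefined otherwise. For a right $G_J$-set $X$, $X\otimes_{G_J}R_J$ is the set of orbits of $X\times R_J$ under $(x,r)g=(xg,g^{-1}r)$, orbits written $x\otimes r$, with partial right $S$-action $(x\otimes r)s=x\otimes rs$ if $rs\in R_J$ and undefined otherwise. The Green's congruence with respect to $e_J$ on a partial $S$-set $\Lambda$ is $\alpha\sim\beta$ iff for all $s\in S$, $\alpha se_J$ and $\beta se_J$ are both undefined or both defined and equal. *)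

theory Defs
  imports Main
begin

text \<open>The semigroup S is the (finite) type 's with multiplication (*).
  Green's relations are defined via principal ideals of S^1.\<close>

definition leR :: "'s::semigroup_mult \<Rightarrow> 's \<Rightarrow> bool" where
  "leR a b \<longleftrightarrow> a = b \<or> (\<exists>u. a = b * u)"

definition leL :: "'s::semigroup_mult \<Rightarrow> 's \<Rightarrow> bool" where
  "leL a b \<longleftrightarrow> a = b \<or> (\<exists>u. a = u * b)"

definition leJ :: "'s::semigroup_mult \<Rightarrow> 's \<Rightarrow> bool" where
  "leJ a b \<longleftrightarrow> a = b \<or> (\<exists>u. a = u * b) \<or> (\<exists>v. a = b * v) \<or> (\<exists>u v. a = u * b * v)"

definition greenR :: "'s::semigroup_mult \<Rightarrow> 's \<Rightarrow> bool" where
  "greenR a b \<longleftrightarrow> leR a b \<and> leR b a"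

definition greenL :: "'s::semigroup_mult \<Rightarrow> 's \<Rightarrow> bool" where
  "greenL a b \<longleftrightarrow> leL a b \<and> leL b a"

definition greenJ :: "'s::semigroup_mult \<Rightarrow> 's \<Rightarrow> bool" where
  "greenJ a b \<longleftrightarrow> leJ a b \<and> leJ b a"

definition greenH :: "'s::semigroup_mult \<Rightarrow> 's \<Rightarrow> bool" where
  "greenH a b \<longleftrightarrow> greenR a b \<and> greenL a b"

definition Rclass :: "'s::semigroup_mult \<Rightarrow> 's set" where
  "Rclass a = {b. greenR a b}"

definition Lclass :: "'s::semigroup_mult \<Rightarrow> 's set" where
  "Lclass a = {b. greenL a b}"

definition Hclass :: "'s::semigroup_mult \<Rightarrow> 's set" where
  "Hclass a = {b. greenH a b}"

definition Jclass :: "'s::semigroup_mult \<Rightarrow> 's set" where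
  "Jclass a = {b. greenJ a b}"

definition idem :: "'s::semigroup_mult \<Rightarrow> bool" where
  "idem f \<longleftrightarrow> f * f = f"

definition is_Jclass :: "'s::semigroup_mult set \<Rightarrow> bool" where
  "is_Jclass J \<longleftrightarrow> (\<exists>a. J = Jclass a)"

definition regular_Jclass :: "'s::semigroup_mult set \<Rightarrow> bool" where
  "regular_Jclass J \<longleftrightarrow> (\<forall>x\<in>J. \<exists>y. x * y * x = x)"

definition L_separated :: "'s::semigroup_mult set \<Rightarrow> bool" where
  "L_separated J \<longleftrightarrow>
     (\<forall>a\<in>J. \<forall>b\<in>J. Lclass a \<noteq> Lclass b \<longrightarrow>
        (\<exists>c\<in>J. (\<exists>f\<in>Rclass c \<inter> Lclass a. idem f) \<noteq> (\<exists>f\<in>Rclass c \<inter> Lclass b. idem f)))"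

definition grp_inv :: "'s::semigroup_mult \<Rightarrow> 's \<Rightarrow> 's" where
  "grp_inv e g = (THE h. h \<in> Hclass e \<and> g * h = e \<and> h * g = e)"

text \<open>A right G_e-set: the action act x g is only meaningful for g in Hclass e.\<close>
definition right_Gset :: "'s::semigroup_mult \<Rightarrow> ('x \<Rightarrow> 's \<Rightarrow> 'x) \<Rightarrow> bool" where
  "right_Gset e act \<longleftrightarrow>
     (\<forall>x. act x e = x) \<and>
     (\<forall>x. \<forall>g\<in>Hclass e. \<forall>h\<in>Hclass e. act (act x g) h = act x (g * h))"

text \<open>The orbit relation on X \<times> R_e for (x,r)g = (xg, g^-1 r).\<close>
definition orbit_rel :: "'s::semigroup_mult \<Rightarrow> ('x \<Rightarrow> 's \<Rightarrow> 'x) \<Rightarrow> (('x \<times> 's) \<times> ('x \<times> 's)) set" where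
  "orbit_rel e act =
     {((x, r), (y, t)). r \<in> Rclass e \<and> t \<in> Rclass e \<and>
        (\<exists>g\<in>Hclass e. y = act x g \<and> t = grp_inv e g * r)}"

definition tensor :: "'s::semigroup_mult \<Rightarrow> ('x \<Rightarrow> 's \<Rightarrow> 'x) \<Rightarrow> ('x \<times> 's) set set" where
  "tensor e act = (UNIV \<times> Rclass e) // orbit_rel e act"

definition tensor_elem :: "'s::semigroup_mult \<Rightarrow> ('x \<Rightarrow> 's \<Rightarrow> 'x) \<Rightarrow> 'x \<Rightarrow> 's \<Rightarrow> ('x \<times> 's) set" where
  "tensor_elem e act x r = orbit_rel e act `` {(x, r)}"

text \<open>Partial right action (x \<otimes> r) s = x \<otimes> rs if rs \<in> R_e, undefined otherwise
  (computed on a chosen representative).\<close>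
definition tensor_act :: "'s::semigroup_mult \<Rightarrow> ('x \<Rightarrow> 's \<Rightarrow> 'x) \<Rightarrow> ('x \<times> 's) set \<Rightarrow> 's \<Rightarrow> ('x \<times> 's) set option" where
  "tensor_act e act \<alpha> s =
     (let p = (SOME p. p \<in> \<alpha>) in
       if snd p * s \<in> Rclass e then Some (tensor_elem e act (fst p) (snd p * s)) else None)"

text \<open>Green's congruence with respect to e on the partial S-set X \<otimes> R_e:
  \<alpha> ~ \<beta> iff for all s, \<alpha>se and \<beta>se are both undefined or both defined and equal.\<close>
definition greens_congruence :: "'s::semigroup_mult \<Rightarrow> ('x \<Rightarrow> 's \<Rightarrow> 'x) \<Rightarrow> (('x \<times> 's) set \<times> ('x \<times> 's) set) set" where
  "greens_congruence e act =
     {(\<alpha>, \<beta>). \<alpha> \<in> tensor e act \<and> \<beta> \<in> tensor e act \<and>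
        (\<forall>s. Option.bind (tensor_act e act \<alpha> s) (\<lambda>\<gamma>. tensor_act e act \<gamma> e) =
             Option.bind (tensor_act e act \<beta> s) (\<lambda>\<gamma>. tensor_act e act \<gamma> e))}"

end

theory Submission
  imports Defs
begin

(* Write the two elements as x \<otimes> r and y \<otimes> t with r, t \<in> R_e. If they are Green-related,
   then r s and t s lie in R_e for the same s. Suppose L_r \<noteq> L_t. By L-separation there is an
   R-class R whose intersection with, say, L_r contains an idempotent f. Since r f = r, the element
   s = f v with r v = e gives r s = e, hence t f v \<in> R_e. Then t f lies in J, and the
   Clifford-Miller theorem, which needs stability of finite semigroups, puts an idempotent in
   R \<inter> L_t. This contradicts the choice of R, so r L t, i.e. t = g r for some g \<in> G_e. Then
   y \<otimes> t = y g \<otimes> r, and applying v and then e gives x \<otimes> e = y g \<otimes> e. Since the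
   stabiliser of e in G_e is trivial, x = y g. *)

section \<open>Green's relations\<close>

lemma leR_refl [simp]: "leR a a"
  by (simp add: leR_def)

lemma leL_refl [simp]: "leL a a"
  by (simp add: leL_def)

lemma leR_mult: "leR (a * b) a"
  unfolding leR_def by blast

lemma leL_mult: "leL (a * b) b"
  unfolding leL_def by blast

lemma leR_trans: "leR a b \<Longrightarrow> leR b c \<Longrightarrow> leR a (c::'s::semigroup_mult)"
  unfolding leR_def by (metis mult.assoc)

lemma leL_trans: "leL a b \<Longrightarrow> leL b c \<Longrightarrow> leL a (c::'s::semigroup_mult)"
  unfolding leL_def by (metis mult.assoc)

lemma leJ_trans: "leJ a b \<Longrightarrow> leJ b c \<Longrightarrow> leJ a (c::'s::semigroup_mult)"
  unfolding leJ_def by (elim disjE exE; metis mult.assoc)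

lemma leR_imp_leJ: "leR a b \<Longrightarrow> leJ a b"
  unfolding leR_def leJ_def by blast

lemma leL_imp_leJ: "leL a b \<Longrightarrow> leJ a b"
  unfolding leL_def leJ_def by blast

lemma greenR_refl [simp]: "greenR a a"
  by (simp add: greenR_def)

lemma greenL_refl [simp]: "greenL a a"
  by (simp add: greenL_def)

lemma greenR_sym: "greenR a b \<Longrightarrow> greenR b a"
  by (simp add: greenR_def)

lemma greenJ_sym: "greenJ a b \<Longrightarrow> greenJ b a"
  by (simp add: greenJ_def)

lemma greenR_trans: "greenR a b \<Longrightarrow> greenR b c \<Longrightarrow> greenR a (c::'s::semigroup_mult)"
  unfolding greenR_def using leR_trans by blast

lemma greenJ_trans: "greenJ a b \<Longrightarrow> greenJ b c \<Longrightarrow> greenJ a (c::'s::semigroup_mult)"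
  unfolding greenJ_def using leJ_trans by blast

lemma greenR_imp_greenJ: "greenR a b \<Longrightarrow> greenJ a b"
  unfolding greenR_def greenJ_def using leR_imp_leJ by blast

lemma greenL_imp_greenJ: "greenL a b \<Longrightarrow> greenJ a b"
  unfolding greenL_def greenJ_def using leL_imp_leJ by blast

lemma Lclass_eq_iff: "Lclass a = Lclass b \<longleftrightarrow> greenL a (b::'s::semigroup_mult)"
  unfolding Lclass_def greenL_def by (auto intro: leL_trans)

lemma Jclass_eq_of_mem: "is_Jclass J \<Longrightarrow> e \<in> J \<Longrightarrow> J = Jclass (e::'s::semigroup_mult)"
  unfolding is_Jclass_def Jclass_def by (auto intro: greenJ_trans greenJ_sym)

lemma Hclass_iff: "g \<in> Hclass e \<longleftrightarrow> greenR e g \<and> greenL e g"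
  by (simp add: Hclass_def greenH_def)

section \<open>Stability of finite semigroups\<close>

lemma funpow_mult_left_mult_right:
  "((\<lambda>w. u * w) ^^ n) (z * y) = ((\<lambda>w. u * w) ^^ n) z * (y::'s::semigroup_mult)"
  by (induction n) (simp_all add: mult.assoc)

lemma funpow_mult_right_mult_left:
  "((\<lambda>w. w * y) ^^ n) (u * z) = u * ((\<lambda>w. w * y) ^^ n) (z::'s::semigroup_mult)"
  by (induction n) (simp_all add: mult.assoc)

lemma funpow_mult_left_right_commute:
  "((\<lambda>w. u * w) ^^ n) (((\<lambda>w. w * y) ^^ m) z) = ((\<lambda>w. w * y) ^^ m) (((\<lambda>w. u * w) ^^ n) (z::'s::semigroup_mult))"
  by (induction m) (simp_all add: funpow_mult_left_mult_right)

lemma leR_funpow_mult_right: "leR (((\<lambda>w. w * y) ^^ k) z) (z::'s::semigroup_mult)"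
  by (induction k) (auto intro: leR_trans leR_mult)

lemma leL_funpow_mult_left: "leL (((\<lambda>w. y * w) ^^ k) z) (z::'s::semigroup_mult)"
  by (induction k) (auto intro: leL_trans leL_mult)

lemma finite_seq_repeats: "\<exists>i j::nat. i < j \<and> f i = (f j :: 'a::finite)"
proof -
  have "\<not> inj f"
    using finite_imageD[OF finite] infinite_UNIV_nat by blast
  then show ?thesis
    unfolding inj_def by (metis linorder_neq_iff)
qed

(* From a = u^n a y^n and a repetition y^i a = y^(i+k+1) a we get a = a y^(k+1). *)
lemma leR_mult_right_if_fixed:
  fixes a :: "'s::{semigroup_mult,finite}"
  assumes fixed: "a = u * a * y"
  shows "leR a (a * y)"
proof -
  let ?l = "\<lambda>w. u * w" and ?r = "\<lambda>w. w * y"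
  have unfold: "(?l ^^ n) ((?r ^^ n) a) = a" for n
  proof (induction n)
    case (Suc n)
    then have "(?l ^^ Suc n) ((?r ^^ Suc n) a) = u * a * y"
      by (simp add: funpow_mult_left_mult_right mult.assoc)
    then show ?case
      by (simp add: fixed[symmetric])
  qed simp
  obtain i j where ij: "i < j" "(?r ^^ i) a = (?r ^^ j) a"
    using finite_seq_repeats[of "\<lambda>n. (?r ^^ n) a"] by blast
  then obtain k where j: "j = Suc k + i"
    using less_iff_Suc_add by auto
  have "a = (?l ^^ i) ((?r ^^ j) a)"
    by (simp add: unfold flip: ij(2))
  also have "\<dots> = (?r ^^ Suc k) ((?l ^^ i) ((?r ^^ i) a))"
    by (simp only: j funpow_add comp_apply funpow_mult_left_right_commute)
  also have "\<dots> = (?r ^^ k) (a * y)"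
    by (simp only: funpow_Suc_right comp_apply unfold)
  finally have "(?r ^^ k) (a * y) = a"
    by (rule sym)
  with leR_funpow_mult_right[where y = y and k = k and z = "a * y"] show ?thesis
    by (simp only:)
qed

lemma leL_mult_left_if_fixed:
  fixes a :: "'s::{semigroup_mult,finite}"
  assumes fixed: "a = y * a * u"
  shows "leL a (y * a)"
proof -
  let ?l = "\<lambda>w. y * w" and ?r = "\<lambda>w. w * u"
  have unfold: "(?r ^^ n) ((?l ^^ n) a) = a" for n
  proof (induction n)
    case (Suc n)
    then have "(?r ^^ Suc n) ((?l ^^ Suc n) a) = y * a * u"
      by (simp add: funpow_mult_right_mult_left mult.assoc)
    then show ?case
      by (simp add: fixed[symmetric])
  qed simp
  obtain i j where ij: "i < j" "(?l ^^ i) a = (?l ^^ j) a"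
    using finite_seq_repeats[of "\<lambda>n. (?l ^^ n) a"] by blast
  then obtain k where j: "j = Suc k + i"
    using less_iff_Suc_add by auto
  have "a = (?r ^^ i) ((?l ^^ j) a)"
    by (simp add: unfold flip: ij(2))
  also have "\<dots> = (?l ^^ Suc k) ((?r ^^ i) ((?l ^^ i) a))"
    by (simp only: j funpow_add comp_apply funpow_mult_left_right_commute)
  also have "\<dots> = (?l ^^ k) (y * a)"
    by (simp only: funpow_Suc_right comp_apply unfold)
  finally have "(?l ^^ k) (y * a) = a"
    by (rule sym)
  with leL_funpow_mult_left[where y = y and k = k and z = "y * a"] show ?thesis
    by (simp only:)
qed

lemma leR_mult_if_leJ:
  fixes a b :: "'s::{semigroup_mult,finite}"
  assumes "leJ a (a * b)"
  shows "leR a (a * b)"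
  using assms unfolding leJ_def
proof (elim disjE exE)
  fix u
  assume "a = u * (a * b)"
  then show ?thesis
    by (intro leR_mult_right_if_fixed) (simp add: mult.assoc)
next
  fix u v
  assume "a = u * (a * b) * v"
  then have "leR a (a * (b * v))"
    by (intro leR_mult_right_if_fixed) (simp add: mult.assoc)
  then show ?thesis
    by (metis leR_trans leR_mult mult.assoc)
qed (unfold leR_def, blast+)

lemma leL_mult_if_leJ:
  fixes a b :: "'s::{semigroup_mult,finite}"
  assumes "leJ b (a * b)"
  shows "leL b (a * b)"
  using assms unfolding leJ_def
proof (elim disjE exE)
  fix v
  assume "b = a * b * v"
  then show ?thesis
    by (rule leL_mult_left_if_fixed)
next
  fix u v
  assume "b = u * (a * b) * v"
  then have "leL b (u * a * b)"
    by (intro leL_mult_left_if_fixed) (simp add: mult.assoc)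
  then show ?thesis
    by (metis leL_trans leL_mult mult.assoc)
qed (unfold leL_def, blast+)

lemma Clifford_Miller:
  fixes t f :: "'s::{semigroup_mult,finite}"
  assumes f: "idem f" and t: "greenJ t (t * f)" and "greenJ f (t * f)"
  obtains k where "idem k" "greenL t k" "greenR f k"
proof -
  have ff: "f * f = f"
    using f by (simp add: idem_def)
  have "leR t (t * f)"
    using t by (simp add: greenJ_def leR_mult_if_leJ)
  then obtain z where z: "t = t * f * z"
    unfolding leR_def by (metis ff mult.assoc)
  have "leL f (t * f)"
    using \<open>greenJ f (t * f)\<close> by (simp add: greenJ_def leL_mult_if_leJ)
  then obtain w where w: "f = w * t * f"
    unfolding leL_def by (metis ff mult.assoc)
  have k: "w * t = f * z"
    by (metis z w mult.assoc)
  show thesis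
  proof
    show "idem (w * t)"
      unfolding idem_def by (metis k w mult.assoc)
    show "greenL t (w * t)"
      unfolding greenL_def leL_def by (metis k z mult.assoc)
    show "greenR f (w * t)"
      unfolding greenR_def leR_def by (metis k w mult.assoc)
  qed
qed

section \<open>The maximal subgroup at an idempotent\<close>

locale max_subgroup =
  fixes e :: "'s::semigroup_mult"
  assumes idem_e: "idem e"
begin

lemma idem_mult [simp]: "e * e = e"
  using idem_e by (simp add: idem_def)

lemma Rclass_left_unit:
  assumes "r \<in> Rclass e"
  shows "e * r = r"
proof -
  from assms have "r = e \<or> (\<exists>u. r = e * u)"
    by (simp add: Rclass_def greenR_def leR_def)
  then show ?thesis
    by (elim disjE exE) (simp_all flip: mult.assoc)
qed

lemma Lclass_right_unit:
  assumes "greenL e g"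
  shows "g * e = g"
proof -
  from assms have "g = e \<or> (\<exists>u. g = u * e)"
    by (simp add: greenL_def leL_def)
  then show ?thesis
    by (elim disjE exE) (simp_all add: mult.assoc)
qed

lemma Rclass_right_inverse:
  assumes "r \<in> Rclass e"
  obtains v where "r * v = e"
proof -
  from assms have "e = r \<or> (\<exists>v. e = r * v)"
    by (simp add: Rclass_def greenR_def leR_def)
  with that show thesis
    by (metis idem_mult)
qed

lemma Lclass_left_inverse:
  assumes "greenL e g"
  obtains w where "w * g = e"
proof -
  from assms have "e = g \<or> (\<exists>w. e = w * g)"
    by (simp add: greenL_def leL_def)
  with that show thesis
    by (metis idem_mult)
qed

lemma Hclass_units:
  assumes "g \<in> Hclass e"
  shows "e * g = g" "g * e = g"
  using assms Rclass_left_unit Lclass_right_unit by (auto simp: Hclass_iff Rclass_def)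

lemma Hclass_inverse_exists:
  assumes g: "g \<in> Hclass e"
  shows "\<exists>h\<in>Hclass e. g * h = e \<and> h * g = e"
proof -
  obtain v where v: "g * v = e"
    using g Rclass_right_inverse by (auto simp: Hclass_iff Rclass_def)
  obtain w where w: "w * g = e"
    using g Lclass_left_inverse by (auto simp: Hclass_iff)
  have gh: "g * (e * v) = e"
    by (metis Hclass_units(2) g v mult.assoc)
  have wh: "w * e = e * v"
    by (metis gh w idem_mult mult.assoc)
  then have hg: "e * v * g = e"
    by (metis w Hclass_units(1) g mult.assoc)
  have "e * v \<in> Hclass e"
    unfolding Hclass_iff greenR_def greenL_def leR_def leL_def by (metis gh hg wh)
  with gh hg show ?thesis
    by blast
qed

lemma grp_inv:
  assumes "g \<in> Hclass e"
  shows grp_inv_closed: "grp_inv e g \<in> Hclass e"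
    and grp_inv_right: "g * grp_inv e g = e"
    and grp_inv_left: "grp_inv e g * g = e"
proof -
  obtain h where h: "h \<in> Hclass e" "g * h = e" "h * g = e"
    using Hclass_inverse_exists assms by blast
  have "grp_inv e g = h"
    unfolding grp_inv_def
  proof (rule the_equality)
    fix h'
    assume h': "h' \<in> Hclass e \<and> g * h' = e \<and> h' * g = e"
    then have "h' = h' * g * h"
      by (metis Hclass_units(2) h(2) mult.assoc)
    also have "\<dots> = h"
      using h' Hclass_units(1)[OF h(1)] by simp
    finally show "h' = h" .
  qed (use h in auto)
  with h show "grp_inv e g \<in> Hclass e" "g * grp_inv e g = e" "grp_inv e g * g = e"
    by simp_all
qed

lemma grp_inv_unique:
  assumes g: "g \<in> Hclass e" and h: "h \<in> Hclass e" and gh: "g * h = e"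
  shows "grp_inv e g = h"
proof -
  have "grp_inv e g = grp_inv e g * g * h"
    using grp_inv_closed[OF g] by (simp add: mult.assoc gh Hclass_units)
  also have "\<dots> = h"
    using grp_inv_left[OF g] Hclass_units(1)[OF h] by simp
  finally show ?thesis .
qed

lemma idem_in_Hclass: "e \<in> Hclass e"
  by (simp add: Hclass_iff)

lemma grp_inv_idem [simp]: "grp_inv e e = e"
  using grp_inv_unique idem_in_Hclass by simp

lemma grp_inv_grp_inv: "g \<in> Hclass e \<Longrightarrow> grp_inv e (grp_inv e g) = g"
  by (simp add: grp_inv_closed grp_inv_left grp_inv_unique)

lemma Hclass_mult_closed:
  assumes g: "g \<in> Hclass e" and h: "h \<in> Hclass e"
  shows "g * h \<in> Hclass e"
proof -
  have "g * h * (grp_inv e h * grp_inv e g) = e"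
    by (metis g h grp_inv_right Hclass_units(2) mult.assoc)
  moreover have "grp_inv e h * grp_inv e g * (g * h) = e"
    by (metis g h grp_inv_left Hclass_units(1) mult.assoc)
  moreover have "leR (g * h) e" "leL (g * h) e"
    using g h leR_trans[OF leR_mult] leL_trans[OF leL_mult]
    by (auto simp: Hclass_iff greenR_def greenL_def)
  ultimately show ?thesis
    unfolding Hclass_iff greenR_def greenL_def leR_def leL_def by metis
qed

lemma grp_inv_mult:
  assumes g: "g \<in> Hclass e" and h: "h \<in> Hclass e"
  shows "grp_inv e (g * h) = grp_inv e h * grp_inv e g"
proof (rule grp_inv_unique)
  show "g * h * (grp_inv e h * grp_inv e g) = e"
    by (metis g h grp_inv_right Hclass_units(2) mult.assoc)
qed (simp_all add: g h grp_inv_closed Hclass_mult_closed)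

lemma Hclass_mult_Rclass:
  assumes k: "k \<in> Hclass e" and z: "z \<in> Rclass e"
  shows "k * z \<in> Rclass e"
proof -
  obtain v where "z * v = e"
    using z Rclass_right_inverse by blast
  then have "e = k * z * (v * grp_inv e k)"
    by (metis k grp_inv_right Hclass_units(2) mult.assoc)
  then have "leR e (k * z)"
    unfolding leR_def by blast
  moreover have "leR (k * z) e"
    using k leR_trans[OF leR_mult] by (auto simp: Hclass_iff greenR_def)
  ultimately show ?thesis
    by (simp add: Rclass_def greenR_def)
qed

lemma Hclass_mult_Rclass_iff:
  assumes g: "g \<in> Hclass e" and w: "e * w = w"
  shows "g * w \<in> Rclass e \<longleftrightarrow> w \<in> Rclass e"
proof
  assume "g * w \<in> Rclass e"
  then have "grp_inv e g * (g * w) \<in> Rclass e"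
    by (simp add: g grp_inv_closed Hclass_mult_Rclass)
  then show "w \<in> Rclass e"
    by (simp add: g grp_inv_left w flip: mult.assoc)
qed (simp add: g Hclass_mult_Rclass)

lemma greenL_imp_Hclass_translate:
  assumes r: "r \<in> Rclass e" and t: "t \<in> Rclass e" and rt: "greenL r t"
  obtains g where "g \<in> Hclass e" "t = g * r"
proof -
  have "leL t r" "leL r t"
    using rt by (simp_all add: greenL_def)
  then obtain u u' where u: "t = u * r" and u': "r = u' * t"
    unfolding leL_def by (metis Rclass_left_unit r t)
  obtain v v' where v: "r * v = e" and v': "t * v' = e"
    using r t Rclass_right_inverse by metis
  define g g' where "g = e * u * e" and "g' = e * u' * e"
  have ge: "g * e = g" "g' * e = g'"
    by (simp_all add: g_def g'_def mult.assoc)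
  have eg: "e * g = g" "e * g' = g'"
    by (simp_all add: g_def g'_def flip: mult.assoc)
  have gr: "g * r = t" and gt: "g' * t = r"
    unfolding g_def g'_def by (metis Rclass_left_unit r t u u' mult.assoc)+
  have "g' * g = e"
    by (metis ge gr gt v mult.assoc)
  moreover have "g * g' = e"
    by (metis ge gr gt v' mult.assoc)
  ultimately have "g \<in> Hclass e"
    unfolding Hclass_iff greenR_def greenL_def leR_def leL_def by (metis eg ge)
  with gr show thesis
    using that by simp
qed

end

section \<open>The tensor product with the R-class\<close>

lemma orbit_rel_iff:
  "((x, r), (y, t)) \<in> orbit_rel e act \<longleftrightarrow>
     r \<in> Rclass e \<and> t \<in> Rclass e \<and> (\<exists>g\<in>Hclass e. y = act x g \<and> t = grp_inv e g * r)"
  by (simp add: orbit_rel_def)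

abbreviation tensor_act_e ::
    "'s::semigroup_mult \<Rightarrow> ('x \<Rightarrow> 's \<Rightarrow> 'x) \<Rightarrow> ('x \<times> 's) set \<Rightarrow> 's \<Rightarrow> ('x \<times> 's) set option"
  where "tensor_act_e e act \<alpha> s \<equiv> Option.bind (tensor_act e act \<alpha> s) (\<lambda>\<gamma>. tensor_act e act \<gamma> e)"

locale tensor_setting = max_subgroup e for e :: "'s::semigroup_mult" +
  fixes act :: "'x \<Rightarrow> 's \<Rightarrow> 'x"
  assumes right_Gset: "right_Gset e act"
begin

lemma act_idem [simp]: "act x e = x"
  using right_Gset by (simp add: right_Gset_def)

lemma act_act: "g \<in> Hclass e \<Longrightarrow> h \<in> Hclass e \<Longrightarrow> act (act x g) h = act x (g * h)"
  using right_Gset by (simp add: right_Gset_def)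

lemma orbit_rel_equiv: "equiv (UNIV \<times> Rclass e) (orbit_rel e act)"
proof (rule equivI)
  show "orbit_rel e act \<subseteq> (UNIV \<times> Rclass e) \<times> (UNIV \<times> Rclass e)"
    by (auto simp: orbit_rel_def)
  show "refl_on (UNIV \<times> Rclass e) (orbit_rel e act)"
    by (rule refl_onI) (auto simp: orbit_rel_def Rclass_left_unit intro!: bexI[OF _ idem_in_Hclass])
  show "sym (orbit_rel e act)"
  proof (rule symI)
    fix p q
    assume "(p, q) \<in> orbit_rel e act"
    then obtain x r g where p: "p = (x, r)" "r \<in> Rclass e"
      and q: "q = (act x g, grp_inv e g * r)" "grp_inv e g * r \<in> Rclass e"
      and g: "g \<in> Hclass e"
      by (auto simp: orbit_rel_def)
    have "x = act (act x g) (grp_inv e g)" and "r = grp_inv e (grp_inv e g) * (grp_inv e g * r)"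
      using g p(2) by (simp_all add: act_act grp_inv_closed grp_inv_right grp_inv_grp_inv
          Rclass_left_unit flip: mult.assoc)
    then have "((act x g, grp_inv e g * r), (x, r)) \<in> orbit_rel e act"
      unfolding orbit_rel_iff using p(2) q(2) g grp_inv_closed by blast
    with p q show "(q, p) \<in> orbit_rel e act"
      by simp
  qed
  show "trans (orbit_rel e act)"
  proof (rule transI)
    fix p q w
    assume "(p, q) \<in> orbit_rel e act" "(q, w) \<in> orbit_rel e act"
    then obtain x r g h where p: "p = (x, r)" "r \<in> Rclass e"
      and w: "w = (act (act x g) h, grp_inv e h * (grp_inv e g * r))"
        "grp_inv e h * (grp_inv e g * r) \<in> Rclass e"
      and gh: "g \<in> Hclass e" "h \<in> Hclass e"
      by (auto simp: orbit_rel_def)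
    have "grp_inv e h * (grp_inv e g * r) = grp_inv e (g * h) * r"
      using gh by (simp add: grp_inv_mult mult.assoc)
    then have "((x, r), (act x (g * h), grp_inv e h * (grp_inv e g * r))) \<in> orbit_rel e act"
      using p(2) w(2) Hclass_mult_closed[OF gh] unfolding orbit_rel_iff by auto
    with p w gh show "(p, w) \<in> orbit_rel e act"
      by (simp add: act_act)
  qed
qed

lemma mem_tensor_elem: "r \<in> Rclass e \<Longrightarrow> (x, r) \<in> tensor_elem e act x r"
  unfolding tensor_elem_def by (rule equiv_class_self[OF orbit_rel_equiv]) simp

lemma tensor_elem_eq_iff:
  "r \<in> Rclass e \<Longrightarrow> t \<in> Rclass e \<Longrightarrow>
    tensor_elem e act x r = tensor_elem e act y t \<longleftrightarrow> ((x, r), (y, t)) \<in> orbit_rel e act"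
  unfolding tensor_elem_def by (rule eq_equiv_class_iff[OF orbit_rel_equiv]) simp_all

lemma tensor_elem_translate:
  assumes g: "g \<in> Hclass e" and r: "r \<in> Rclass e"
  shows "tensor_elem e act (act x g) (grp_inv e g * r) = tensor_elem e act x r"
proof -
  have "grp_inv e g * r \<in> Rclass e"
    using g r by (simp add: Hclass_mult_Rclass grp_inv_closed)
  with g r have "((x, r), (act x g, grp_inv e g * r)) \<in> orbit_rel e act"
    by (auto simp: orbit_rel_iff)
  with r \<open>grp_inv e g * r \<in> Rclass e\<close> show ?thesis
    by (metis tensor_elem_eq_iff)
qed

lemma tensor_act_tensor_elem:
  assumes r: "r \<in> Rclass e"
  shows "tensor_act e act (tensor_elem e act x r) s =
    (if r * s \<in> Rclass e then Some (tensor_elem e act x (r * s)) else None)"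
proof -
  have "(SOME p. p \<in> tensor_elem e act x r) \<in> tensor_elem e act x r"
    using mem_tensor_elem[OF r] by (rule someI)
  then obtain g where g: "g \<in> Hclass e"
    and rep: "(SOME p. p \<in> tensor_elem e act x r) = (act x g, grp_inv e g * r)"
    by (auto simp: tensor_elem_def orbit_rel_def)
  have "e * (r * s) = r * s"
    by (simp add: Rclass_left_unit r flip: mult.assoc)
  then have dom: "grp_inv e g * (r * s) \<in> Rclass e \<longleftrightarrow> r * s \<in> Rclass e"
    by (simp add: g grp_inv_closed Hclass_mult_Rclass_iff)
  have "tensor_elem e act (act x g) (grp_inv e g * (r * s)) = tensor_elem e act x (r * s)"
    if "r * s \<in> Rclass e"
    using g that by (rule tensor_elem_translate)
  with dom show ?thesis
    by (simp add: tensor_act_def rep mult.assoc)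
qed

lemma tensor_act_e_tensor_elem:
  assumes "r \<in> Rclass e"
  shows "tensor_act_e e act (tensor_elem e act x r) s =
    (if r * s \<in> Rclass e \<and> r * s * e \<in> Rclass e then Some (tensor_elem e act x (r * s * e)) else None)"
  using assms by (simp add: tensor_act_tensor_elem)

(* The stabiliser of e in G_e is trivial. *)
lemma tensor_elem_idem_inj:
  assumes "tensor_elem e act x e = tensor_elem e act y e"
  shows "x = y"
proof -
  have e: "e \<in> Rclass e"
    by (simp add: Rclass_def)
  with assms obtain h where h: "h \<in> Hclass e" "y = act x h" "e = grp_inv e h * e"
    by (auto simp: tensor_elem_eq_iff orbit_rel_iff)
  then have "grp_inv e h = e"
    by (simp add: Hclass_units(2) grp_inv_closed)
  then have "h = e"
    using h(1) by (metis grp_inv_grp_inv grp_inv_idem)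
  with h show ?thesis
    by simp
qed

end

lemma tensorE:
  assumes "\<alpha> \<in> tensor e act"
  obtains x r where "r \<in> Rclass e" "\<alpha> = tensor_elem e act x r"
  using assms unfolding tensor_def tensor_elem_def by (auto elim!: quotientE)

section \<open>Separation of L-classes\<close>

lemma Lclass_idempotent_transfer:
  fixes e r t f :: "'s::{semigroup_mult,finite}"
  assumes e: "idem e" and r: "r \<in> Rclass e" and t: "t \<in> Rclass e"
    and f: "idem f" "greenL r f"
    and dom: "\<And>s. r * s = e \<Longrightarrow> t * s \<in> Rclass e"
  obtains k where "idem k" "greenL t k" "greenR f k"
proof (rule Clifford_Miller[OF f(1)])
  interpret max_subgroup e
    using e by unfold_locales
  obtain v where v: "r * v = e"
    using r Rclass_right_inverse by blast
  obtain u where "r = f \<or> r = u * f"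
    using f(2) by (auto simp: greenL_def leL_def)
  then have "r * f = r"
    using f(1) by (auto simp: idem_def mult.assoc)
  with v have "t * (f * v) \<in> Rclass e"
    by (intro dom) (simp flip: mult.assoc)
  with t have "greenR t (t * (f * v))"
    unfolding Rclass_def using greenR_sym greenR_trans by blast
  then have "leR t (t * f * v)"
    by (simp add: greenR_def mult.assoc)
  then have "leR t (t * f)"
    using leR_trans leR_mult by blast
  then show tf: "greenJ t (t * f)"
    unfolding greenJ_def by (simp add: leR_imp_leJ leR_mult)
  have "greenJ r f" "greenJ e r" "greenJ e t"
    using r t f(2) by (simp_all add: Rclass_def greenR_imp_greenJ greenL_imp_greenJ)
  then have "greenJ f t"
    using greenJ_sym greenJ_trans by blast
  with tf show "greenJ f (t * f)"
    using greenJ_trans by blast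
qed

lemma L_separated_greenL:
  fixes e r t :: "'s::{semigroup_mult,finite}"
  assumes J: "is_Jclass J" "L_separated J" "e \<in> J" and e: "idem e"
    and r: "r \<in> Rclass e" and t: "t \<in> Rclass e"
    and dom_rt: "\<And>s. r * s = e \<Longrightarrow> t * s \<in> Rclass e"
    and dom_tr: "\<And>s. t * s = e \<Longrightarrow> r * s \<in> Rclass e"
  shows "greenL r t"
proof (rule ccontr)
  have transfer: "\<exists>k\<in>Rclass c \<inter> Lclass b. idem k"
    if "a \<in> Rclass e" "b \<in> Rclass e" "\<And>s. a * s = e \<Longrightarrow> b * s \<in> Rclass e"
      and "\<exists>f\<in>Rclass c \<inter> Lclass a. idem f" for a b c
  proof -
    from that(4) obtain f where f: "greenR c f" "greenL a f" "idem f"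
      by (auto simp: Rclass_def Lclass_def)
    with Lclass_idempotent_transfer[OF e that(1-2)] that(3)
    obtain k where "idem k" "greenL b k" "greenR f k"
      by metis
    with f show ?thesis
      by (auto simp: Rclass_def Lclass_def intro: greenR_trans)
  qed
  have RJ: "Rclass e \<subseteq> J"
    using Jclass_eq_of_mem[OF J(1,3)] by (auto simp: Rclass_def Jclass_def greenR_imp_greenJ)
  assume "\<not> greenL r t"
  then obtain c where "(\<exists>f\<in>Rclass c \<inter> Lclass r. idem f) \<noteq> (\<exists>f\<in>Rclass c \<inter> Lclass t. idem f)"
    using J(2) r t RJ unfolding L_separated_def Lclass_eq_iff by blast
  then show False
    using transfer[OF r t dom_rt] transfer[OF t r dom_tr] by blast
qed

lemma greens_related_tensor_elem_eq:
  fixes e :: "'s::{semigroup_mult,finite}" and act :: "'x \<Rightarrow> 's \<Rightarrow> 'x"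
  assumes "tensor_setting e act" and J: "is_Jclass J" "L_separated J" "e \<in> J"
    and r: "r \<in> Rclass e" and t: "t \<in> Rclass e"
    and related: "\<And>s. tensor_act_e e act (tensor_elem e act x r) s = tensor_act_e e act (tensor_elem e act y t) s"
  shows "tensor_elem e act x r = tensor_elem e act y t"
proof -
  interpret tensor_setting e act
    by fact
  have e: "e \<in> Rclass e"
    by (simp add: Rclass_def)
  have dom: "r * s \<in> Rclass e \<and> r * s * e \<in> Rclass e \<longleftrightarrow> t * s \<in> Rclass e \<and> t * s * e \<in> Rclass e" for s
    using related[of s] r t by (auto simp: tensor_act_e_tensor_elem split: if_splits)
  have "t * s \<in> Rclass e" if "r * s = e" for s
    using dom[of s] that e by simp
  moreover have "r * s \<in> Rclass e" if "t * s = e" for s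
    using dom[of s] that e by simp
  ultimately have "greenL r t"
    using L_separated_greenL[OF J idem_e r t] by blast
  then obtain g where g: "g \<in> Hclass e" "t = g * r"
    using r t greenL_imp_Hclass_translate by blast
  have "grp_inv e g * t = r"
    using g r by (simp add: grp_inv_left Rclass_left_unit flip: mult.assoc)
  then have \<beta>: "tensor_elem e act y t = tensor_elem e act (act y g) r"
    using tensor_elem_translate[OF g(1) t] by simp
  obtain v where v: "r * v = e"
    using r Rclass_right_inverse by blast
  have "Some (tensor_elem e act x e) = Some (tensor_elem e act (act y g) e)"
    using related[of v] e by (simp add: \<beta> tensor_act_e_tensor_elem r v)
  then have "x = act y g"
    by (simp add: tensor_elem_idem_inj)
  with \<beta> show ?thesis
    by simp
qed

theorem proposition2p9:
  fixes J :: "'s::{semigroup_mult, finite} set"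
    and e :: 's
    and act :: "'x \<Rightarrow> 's \<Rightarrow> 'x"
  assumes "is_Jclass J"
    and "regular_Jclass J"
    and "L_separated J"
    and "e \<in> J"
    and "idem e"
    and "right_Gset e act"
  shows "greens_congruence e act = Id_on (tensor e act)"
proof -
  (* Regularity of J is automatic here, since J contains the idempotent e. *)
  have setting: "tensor_setting e act"
    using assms(5,6) by unfold_locales
  have "\<alpha> = \<beta>" if "(\<alpha>, \<beta>) \<in> greens_congruence e act" for \<alpha> \<beta>
  proof -
    from that have "\<alpha> \<in> tensor e act" "\<beta> \<in> tensor e act"
      and related: "\<And>s. tensor_act_e e act \<alpha> s = tensor_act_e e act \<beta> s"
      by (simp_all add: greens_congruence_def)
    then obtain x y r t where r: "r \<in> Rclass e" and t: "t \<in> Rclass e"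
      and \<alpha>: "\<alpha> = tensor_elem e act x r" and \<beta>: "\<beta> = tensor_elem e act y t"
      by (elim tensorE)
    show ?thesis
      using greens_related_tensor_elem_eq[OF setting assms(1,3,4) r t] related
      by (simp add: \<alpha> \<beta>)
  qed
  then show ?thesis
    by (auto simp: greens_congruence_def)
qed

end
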